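(* Let $H$ be a non-transitive $k$-vertex tournament. If there exists an $s$-vertex tournament $S$ with $s>k$ such that $n(H,S)\ge s^k\cdot 2^{-\binom{k}{2}}$, then $H$ is not quasirandom-forcing.
   Context: A tournament is an orientation of a complete graph; $\mathrm{Aut}(H)$ is its automorphism group. $n(H,S)$ denotes the number of $k$-element vertex subsets of $S$ that induce a tournament isomorphic to $H$. For tournaments $H,G$, $d(H,G)$ is the probability that $\lvert H\rvert$ uniformly random distinct vertices of $G$ induce a tournament isomorphic to $H$ (and $0$ if $\lvert H\rvert>\lvert G\rvert$). A sequence $(G_n)$ of tournaments with $\lvert G_n\rvert\to\infty$ is quasirandom if $\lim_{n\to\infty} d(F,G_n)=\frac{m!}{\lvert\mathrm{Aut}(F)\rvert}2^{-\binom{m}{2}}$ for every tournament $F$ with $m$ vertices. A $k$-vertex tournament $H$ is quasirandom-forcing if every sequence $(G_n)$ of tournaments with $\lvert G_n\rvert\to\infty$ and $\lim_{n\to\infty} d(H,G_n)=\frac{k!}{\lvert\mathrm{Aut}(H)\rvert}2^{-\binom{k}{2}}$ is quasirandom. *)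

theory Defs
  imports Complex_Main "HOL-Library.FuncSet"
begin

text \<open>A tournament is given by a finite vertex set (of naturals) and an arc relation;
  only arcs between vertices of the vertex set matter.\<close>
type_synonym tourn = "nat set \<times> (nat \<Rightarrow> nat \<Rightarrow> bool)"

definition verts :: "tourn \<Rightarrow> nat set" where "verts T = fst T"
definition arc :: "tourn \<Rightarrow> nat \<Rightarrow> nat \<Rightarrow> bool" where "arc T = snd T"

definition tournament :: "tourn \<Rightarrow> bool" where
  "tournament T \<longleftrightarrow> finite (verts T) \<and> (\<forall>u\<in>verts T. \<not> arc T u u) \<and>
     (\<forall>u\<in>verts T. \<forall>v\<in>verts T. u \<noteq> v \<longrightarrow> (arc T u v \<longleftrightarrow> \<not> arc T v u))"

definition transitive_tournament :: "tourn \<Rightarrow> bool" where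
  "transitive_tournament T \<longleftrightarrow>
     (\<forall>u\<in>verts T. \<forall>v\<in>verts T. \<forall>w\<in>verts T. arc T u v \<longrightarrow> arc T v w \<longrightarrow> arc T u w)"

definition tourn_iso :: "tourn \<Rightarrow> tourn \<Rightarrow> bool" where
  "tourn_iso T U \<longleftrightarrow> (\<exists>f. bij_betw f (verts T) (verts U) \<and>
     (\<forall>u\<in>verts T. \<forall>v\<in>verts T. arc T u v \<longleftrightarrow> arc U (f u) (f v)))"

definition Aut :: "tourn \<Rightarrow> (nat \<Rightarrow> nat) set" where
  "Aut T = {f \<in> verts T \<rightarrow>\<^sub>E verts T. bij_betw f (verts T) (verts T) \<and>
     (\<forall>u\<in>verts T. \<forall>v\<in>verts T. arc T u v \<longleftrightarrow> arc T (f u) (f v))}"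

definition induced :: "tourn \<Rightarrow> nat set \<Rightarrow> tourn" where
  "induced T X = (X, arc T)"

definition ncopies :: "tourn \<Rightarrow> tourn \<Rightarrow> nat" where
  "ncopies H S = card {X. X \<subseteq> verts S \<and> card X = card (verts H) \<and> tourn_iso (induced S X) H}"

definition density :: "tourn \<Rightarrow> tourn \<Rightarrow> real" where
  "density H G = (if card (verts H) > card (verts G) then 0
      else real (ncopies H G) / real (card (verts G) choose card (verts H)))"

definition random_density :: "tourn \<Rightarrow> real" where
  "random_density F = fact (card (verts F)) / real (card (Aut F)) *
      2 powr (- real (card (verts F) choose 2))"

definition quasirandom :: "(nat \<Rightarrow> tourn) \<Rightarrow> bool" where
  "quasirandom G \<longleftrightarrow> (\<forall>n. tournament (G n)) \<and>
     filterlim (\<lambda>n. card (verts (G n))) at_top sequentially \<and>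
     (\<forall>F. tournament F \<longrightarrow> (\<lambda>n. density F (G n)) \<longlonglongrightarrow> random_density F)"

definition quasirandom_forcing :: "tourn \<Rightarrow> bool" where
  "quasirandom_forcing H \<longleftrightarrow> (\<forall>G. (\<forall>n. tournament (G n)) \<and>
     filterlim (\<lambda>n. card (verts (G n))) at_top sequentially \<and>
     (\<lambda>n. density H (G n)) \<longlonglongrightarrow> random_density H \<longrightarrow> quasirandom G)"

end

theory Submission
  imports Defs
begin

text \<open>Let n = s q. Moving the vertices 0, ..., n - 1 one at a time from the transitive
  tournament on n vertices into the q-fold blow-up of S, the density of H starts at 0 (H is
  not transitive), ends above k! 2^(-k choose 2) >= random density (each copy of H in S yields
  q^k copies in the blow-up, and s^k q^k >= k! (n choose k)), and changes by at most k/n per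
  step. So some intermediate tournament has H-density within k/n of the random value. Every
  intermediate tournament contains a transitive subtournament on the n/s copies of one vertex
  of S, which keeps the density of the transitive tournament T_K above K!/(s K)^K; for large
  K this exceeds K! 2^(-K choose 2), so these tournaments do not form a quasirandom sequence.\<close>

lemma tourn_iso_sym:
  assumes "tourn_iso T U" shows "tourn_iso U T"
proof -
  obtain f where f: "bij_betw f (verts T) (verts U)"
    and arcs: "\<forall>u\<in>verts T. \<forall>v\<in>verts T. arc T u v \<longleftrightarrow> arc U (f u) (f v)"
    using assms unfolding tourn_iso_def by blast
  let ?g = "inv_into (verts T) f"
  have "bij_betw ?g (verts U) (verts T)" using f by (rule bij_betw_inv_into)
  moreover have "arc U u v \<longleftrightarrow> arc T (?g u) (?g v)" if "u \<in> verts U" "v \<in> verts U" for u v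
    using arcs that f bij_betw_inv_into_right[OF f] bij_betw_apply[OF bij_betw_inv_into[OF f]]
    by metis
  ultimately show ?thesis unfolding tourn_iso_def by blast
qed

lemma tourn_iso_trans:
  assumes "tourn_iso T U" "tourn_iso U W" shows "tourn_iso T W"
proof -
  obtain f where f: "bij_betw f (verts T) (verts U)"
    and "\<forall>u\<in>verts T. \<forall>v\<in>verts T. arc T u v \<longleftrightarrow> arc U (f u) (f v)"
    using assms(1) unfolding tourn_iso_def by blast
  moreover obtain g where "bij_betw g (verts U) (verts W)"
    and "\<forall>u\<in>verts U. \<forall>v\<in>verts U. arc U u v \<longleftrightarrow> arc W (g u) (g v)"
    using assms(2) unfolding tourn_iso_def by blast
  ultimately have "bij_betw (g \<circ> f) (verts T) (verts W)"
    and "\<forall>u\<in>verts T. \<forall>v\<in>verts T. arc T u v \<longleftrightarrow> arc W ((g \<circ> f) u) ((g \<circ> f) v)"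
    by (auto intro: bij_betw_trans simp: bij_betw_apply)
  then show ?thesis unfolding tourn_iso_def by blast
qed

lemma tourn_iso_cong:
  assumes "verts T' = verts T" "\<And>u v. u \<in> verts T \<Longrightarrow> v \<in> verts T \<Longrightarrow> arc T' u v = arc T u v"
  shows "tourn_iso T' U \<longleftrightarrow> tourn_iso T U"
  using assms unfolding tourn_iso_def by auto

lemma transitive_tournament_iso:
  assumes "tourn_iso T U" "transitive_tournament T" shows "transitive_tournament U"
proof -
  obtain g where g: "bij_betw g (verts U) (verts T)"
    and arcs: "\<forall>u\<in>verts U. \<forall>v\<in>verts U. arc U u v \<longleftrightarrow> arc T (g u) (g v)"
    using tourn_iso_sym[OF assms(1)] unfolding tourn_iso_def by blast
  show ?thesis
    using assms(2) arcs bij_betw_apply[OF g] unfolding transitive_tournament_def by metis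
qed

lemma verts_induced [simp]: "verts (induced T X) = X"
  by (simp add: induced_def verts_def)

lemma arc_induced [simp]: "arc (induced T X) = arc T"
  by (simp add: induced_def arc_def)

lemma finite_Aut: "finite (verts T) \<Longrightarrow> finite (Aut T)"
  unfolding Aut_def by (rule finite_subset[of _ "verts T \<rightarrow>\<^sub>E verts T"]) (auto simp: finite_PiE)

lemma restrict_id_in_Aut: "restrict id (verts T) \<in> Aut T"
  unfolding Aut_def by (auto simp: bij_betw_def inj_on_def)

lemma card_Aut_pos: "finite (verts T) \<Longrightarrow> 0 < card (Aut T)"
  using finite_Aut restrict_id_in_Aut card_gt_0_iff by blast

lemma random_density_pos: "finite (verts T) \<Longrightarrow> 0 < random_density T"
  using card_Aut_pos unfolding random_density_def by auto

lemma random_density_le: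
  assumes "finite (verts T)"
  shows "random_density T \<le> fact (card (verts T)) * 2 powr (- real (card (verts T) choose 2))"
proof -
  have "fact (card (verts T)) / real (card (Aut T)) \<le> fact (card (verts T))"
    using card_Aut_pos[OF assms] by (simp add: divide_le_eq)
  then show ?thesis unfolding random_density_def by (rule mult_right_mono) simp
qed

definition copies :: "tourn \<Rightarrow> tourn \<Rightarrow> nat set set" where
  "copies H T = {X. X \<subseteq> verts T \<and> card X = card (verts H) \<and> tourn_iso (induced T X) H}"

lemma ncopies_eq_card_copies: "ncopies H T = card (copies H T)"
  by (simp add: ncopies_def copies_def)

lemma finite_copies: "finite (verts T) \<Longrightarrow> finite (copies H T)"
  unfolding copies_def by (rule finite_subset[of _ "Pow (verts T)"]) auto

lemma density_eq_ncopies: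
  "card (verts H) \<le> card (verts T) \<Longrightarrow>
    density H T = real (ncopies H T) / real (card (verts T) choose card (verts H))"
  by (simp add: density_def)

lemma ncopies_eq_0_if_transitive:
  assumes "transitive_tournament T" "\<not> transitive_tournament H"
  shows "ncopies H T = 0"
proof -
  have "transitive_tournament (induced T X)" if "X \<subseteq> verts T" for X
    using assms(1) that unfolding transitive_tournament_def by auto
  then have "copies H T = {}"
    using assms(2) transitive_tournament_iso unfolding copies_def by blast
  then show ?thesis by (simp add: ncopies_eq_card_copies)
qed

lemma card_subsets_containing_le:
  assumes "finite V"
  shows "card {X. X \<subseteq> V \<and> card X = k \<and> x \<in> X} \<le> (card V - 1) choose (k - 1)"
proof (cases "x \<in> V \<and> k \<noteq> 0")
  case True
  let ?Z = "{Z. Z \<subseteq> V - {x} \<and> card Z = k - 1}"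
  have "{X. X \<subseteq> V \<and> card X = k \<and> x \<in> X} \<subseteq> insert x ` ?Z"
  proof
    fix X assume X: "X \<in> {X. X \<subseteq> V \<and> card X = k \<and> x \<in> X}"
    then have "X = insert x (X - {x})" "card (X - {x}) = k - 1"
      using assms by (auto intro: finite_subset)
    then show "X \<in> insert x ` ?Z" using X by blast
  qed
  then have "card {X. X \<subseteq> V \<and> card X = k \<and> x \<in> X} \<le> card (insert x ` ?Z)"
    using assms by (intro card_mono) auto
  also have "\<dots> \<le> card ?Z" by (rule card_image_le) (use assms in auto)
  also have "\<dots> = (card V - 1) choose (k - 1)" using assms True by (simp add: n_subsets)
  finally show ?thesis .
next
  case False
  then have "{X. X \<subseteq> V \<and> card X = k \<and> x \<in> X} = {}"
    using assms by (auto simp: card_eq_0_iff dest: finite_subset)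
  then show ?thesis by (metis card.empty le0)
qed

text \<open>Changing the arcs at a single vertex x can only create copies of H that contain x.\<close>
lemma ncopies_le_if_arcs_agree_off_vertex:
  assumes fin: "finite (verts T)" and verts: "verts T' = verts T"
    and agree: "\<And>u v. u \<noteq> x \<Longrightarrow> v \<noteq> x \<Longrightarrow> arc T' u v = arc T u v"
  shows "ncopies H T' \<le> ncopies H T + ((card (verts T) - 1) choose (card (verts H) - 1))"
proof -
  let ?Y = "{X. X \<subseteq> verts T \<and> card X = card (verts H) \<and> x \<in> X}"
  have "copies H T' \<subseteq> copies H T \<union> ?Y"
  proof
    fix X assume X: "X \<in> copies H T'"
    show "X \<in> copies H T \<union> ?Y"
    proof (cases "x \<in> X")
      case False
      then have "tourn_iso (induced T' X) H \<longleftrightarrow> tourn_iso (induced T X) H"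
        by (intro tourn_iso_cong) (simp_all, metis agree)
      then show ?thesis using X verts by (auto simp: copies_def)
    qed (use X verts in \<open>auto simp: copies_def\<close>)
  qed
  then have "ncopies H T' \<le> card (copies H T \<union> ?Y)"
    unfolding ncopies_eq_card_copies using fin
    by (intro card_mono) (auto intro: finite_copies finite_subset[of _ "Pow (verts T)"])
  also have "\<dots> \<le> ncopies H T + card ?Y"
    unfolding ncopies_eq_card_copies by (rule card_Un_le)
  also have "\<dots> \<le> ncopies H T + ((card (verts T) - 1) choose (card (verts H) - 1))"
    using card_subsets_containing_le[OF fin] by simp
  finally show ?thesis .
qed

definition transitive_tourn :: "nat \<Rightarrow> tourn" where
  "transitive_tourn K = ({0..<K}, (<))"

lemma verts_transitive_tourn [simp]: "verts (transitive_tourn K) = {0..<K}"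
  and arc_transitive_tourn [simp]: "arc (transitive_tourn K) = (<)"
  by (simp_all add: transitive_tourn_def verts_def arc_def)

lemma tournament_transitive_tourn: "tournament (transitive_tourn K)"
  unfolding tournament_def by auto

lemma random_density_transitive_tourn_le:
  "random_density (transitive_tourn K) \<le> fact K * 2 powr (- real (K choose 2))"
  using random_density_le[of "transitive_tourn K"] by simp

lemma tourn_iso_transitive_tourn:
  assumes "finite X" "\<forall>u\<in>X. \<forall>v\<in>X. arc T u v \<longleftrightarrow> u < v"
  shows "tourn_iso (transitive_tourn (card X)) (induced T X)"
proof -
  let ?xs = "sorted_list_of_set X"
  have "bij_betw ((!) ?xs) {0..<card X} X"
    using assms(1) by (intro bij_betw_nth) (auto simp: lessThan_atLeast0)
  moreover have "i < j \<longleftrightarrow> ?xs ! i < ?xs ! j" if "i < card X" "j < card X" for i j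
    using that assms(1) sorted_wrt_nth_less[of "(<)" ?xs]
    by (metis length_sorted_list_of_set linorder_neq_iff order_less_asym strict_sorted_list_of_set)
  ultimately show ?thesis
    using assms(2) unfolding tourn_iso_def
    by (intro exI[of _ "(!) ?xs"]) (auto simp: bij_betw_apply)
qed

lemma ncopies_transitive_tourn_ge:
  assumes fin: "finite (verts T)" and A: "A \<subseteq> verts T"
    and ordered: "\<forall>u\<in>A. \<forall>v\<in>A. arc T u v \<longleftrightarrow> u < v"
  shows "card A choose K \<le> ncopies (transitive_tourn K) T"
proof -
  have "{X. X \<subseteq> A \<and> card X = K} \<subseteq> copies (transitive_tourn K) T"
  proof
    fix X assume X: "X \<in> {X. X \<subseteq> A \<and> card X = K}"
    then have "tourn_iso (transitive_tourn K) (induced T X)"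
      using ordered fin A tourn_iso_transitive_tourn[of X T] by (auto dest: finite_subset)
    then show "X \<in> copies (transitive_tourn K) T"
      using X A by (auto simp: copies_def intro: tourn_iso_sym)
  qed
  then have "card {X. X \<subseteq> A \<and> card X = K} \<le> ncopies (transitive_tourn K) T"
    unfolding ncopies_eq_card_copies using fin by (intro card_mono finite_copies)
  moreover have "card {X. X \<subseteq> A \<and> card X = K} = card A choose K"
    using A fin by (simp add: n_subsets finite_subset)
  ultimately show ?thesis by simp
qed

lemma real_binomial_fact_le_power: "real (n choose k) * fact k \<le> real n ^ k"
  using binomial_fact_pow[of n k] by (metis of_nat_fact of_nat_le_iff of_nat_mult of_nat_power)

lemma density_transitive_tourn_ge:
  assumes fin: "finite (verts T)" and A: "A \<subseteq> verts T"
    and ordered: "\<forall>u\<in>A. \<forall>v\<in>A. arc T u v \<longleftrightarrow> u < v"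
    and K: "1 \<le> K" "K \<le> card A" and size: "real (card (verts T)) \<le> a * real (card A)"
  shows "fact K * (1 / (a * K)) ^ K \<le> density (transitive_tourn K) T"
proof -
  define n where "n = card (verts T)"
  define L where "L = card A"
  have "L \<le> n" using A fin unfolding L_def n_def by (rule card_mono[rotated])
  then have pos: "0 < real K" "0 < real L" "0 < real n" "0 < real (n choose K)"
    using K unfolding L_def by auto
  have "0 < a"
    using size pos unfolding n_def L_def by (smt (verit) mult_nonpos_nonneg of_nat_0_le_iff)
  have "1 / (a * K) \<le> real L / (real K * real n)"
    using size pos \<open>0 < a\<close> unfolding n_def L_def by (simp add: field_simps)
  then have "fact K * (1 / (a * K)) ^ K \<le> fact K * (real L / (real K * real n)) ^ K"
    using pos \<open>0 < a\<close> by (intro mult_left_mono power_mono) simp_all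
  also have "\<dots> = (real L / real K) ^ K / (real n ^ K / fact K)"
    using pos by (simp add: power_divide power_mult_distrib)
  also have "\<dots> \<le> real (L choose K) / real (n choose K)"
  proof (rule frac_le)
    show "(real L / real K) ^ K \<le> real (L choose K)"
      unfolding L_def by (rule binomial_ge_n_over_k_pow_k) (rule K(2))
  next
    show "real (n choose K) \<le> real n ^ K / fact K"
      using real_binomial_fact_le_power[of n K] by (simp add: pos_le_divide_eq)
  qed (use pos in auto)
  also have "\<dots> \<le> real (ncopies (transitive_tourn K) T) / real (n choose K)"
    using ncopies_transitive_tourn_ge[OF fin A ordered, of K] unfolding L_def
    by (intro divide_right_mono) simp_all
  also have "\<dots> = density (transitive_tourn K) T"
    using K \<open>L \<le> n\<close> unfolding L_def n_def by (simp add: density_eq_ncopies)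
  finally show ?thesis .
qed

lemma quasirandomD:
  assumes "quasirandom G"
  shows "tournament (G n)"
    and "tournament F \<Longrightarrow> (\<lambda>n. density F (G n)) \<longlonglongrightarrow> random_density F"
  using assms unfolding quasirandom_def by blast+

lemma ex_linear_less_power2:
  fixes a :: real shows "\<exists>M::nat. a * (2 * M + 1) < 2 ^ M"
proof -
  obtain c :: nat where c: "a \<le> real c" using real_arch_simple by blast
  define t where "t = 4 * c + 2"
  have "c * (2 * (2 * t) + 1) < t * t" unfolding t_def by (simp add: algebra_simps)
  also have "t * t < 2 ^ t * 2 ^ t" by (intro mult_strict_mono less_exp) auto
  also have "\<dots> = 2 ^ (2 * t)" by (simp only: mult_2 power_add)
  finally have "real (c * (2 * (2 * t) + 1)) < real (2 ^ (2 * t))" by (simp only: of_nat_less_iff)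
  then have "real c * real (2 * (2 * t) + 1) < 2 ^ (2 * t)"
    by (simp only: of_nat_mult of_nat_power of_nat_numeral)
  then have "a * real (2 * (2 * t) + 1) < 2 ^ (2 * t)"
    using c by (smt (verit) mult_right_mono of_nat_0_le_iff)
  then show ?thesis by blast
qed

lemma random_density_transitive_tourn_less:
  assumes "0 < a"
  shows "\<exists>K\<ge>1. random_density (transitive_tourn K) < fact K * (1 / (a * K)) ^ K"
proof -
  obtain M :: nat where M: "a * (2 * M + 1) < 2 ^ M" using ex_linear_less_power2 by blast
  define K where "K = 2 * M + 1"
  have "K choose 2 = M * K" unfolding K_def choose_two by simp
  then have "random_density (transitive_tourn K) \<le> fact K * (1 / 2 ^ M) ^ K"
    using random_density_transitive_tourn_le[of K]
    by (simp add: powr_minus powr_realpow power_mult inverse_eq_divide power_one_over del: of_nat_mult)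
  also have "\<dots> < fact K * (1 / (a * K)) ^ K"
  proof -
    have "1 / 2 ^ M < 1 / (a * K)"
      using M assms unfolding K_def by (intro divide_strict_left_mono) auto
    then show ?thesis by (intro mult_strict_left_mono power_strict_mono) (auto simp: K_def)
  qed
  finally have "random_density (transitive_tourn K) < fact K * (1 / (a * K)) ^ K" .
  moreover have "1 \<le> K" unfolding K_def by simp
  ultimately show ?thesis by blast
qed

lemma not_quasirandom_if_linear_ordered_subsets:
  assumes sub: "\<And>m. A m \<subseteq> verts (G m)"
    and ordered: "\<And>m. \<forall>u\<in>A m. \<forall>v\<in>A m. arc (G m) u v \<longleftrightarrow> u < v"
    and size: "\<And>m. real (card (verts (G m))) \<le> a * real (card (A m))" and "0 < a"
    and grow: "filterlim (\<lambda>m. card (A m)) at_top sequentially"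
  shows "\<not> quasirandom G"
proof
  assume qr: "quasirandom G"
  obtain K where K: "1 \<le> K" "random_density (transitive_tourn K) < fact K * (1 / (a * K)) ^ K"
    using random_density_transitive_tourn_less[OF \<open>0 < a\<close>] by blast
  have lim: "(\<lambda>m. density (transitive_tourn K) (G m)) \<longlonglongrightarrow> random_density (transitive_tourn K)"
    using qr tournament_transitive_tourn by (rule quasirandomD)
  have "\<forall>\<^sub>F m in sequentially. fact K * (1 / (a * K)) ^ K \<le> density (transitive_tourn K) (G m)"
  proof (rule eventually_mono)
    show "\<forall>\<^sub>F m in sequentially. K \<le> card (A m)"
      using grow by (simp add: filterlim_at_top)
    fix m assume "K \<le> card (A m)"
    moreover have "finite (verts (G m))"
      using quasirandomD(1)[OF qr] by (simp add: tournament_def)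
    ultimately show "fact K * (1 / (a * K)) ^ K \<le> density (transitive_tourn K) (G m)"
      by (intro density_transitive_tourn_ge[OF _ sub ordered K(1) _ size])
  qed
  then have "fact K * (1 / (a * K)) ^ K \<le> random_density (transitive_tourn K)"
    using tendsto_lowerbound[OF lim _ trivial_limit_sequentially] by blast
  with K(2) show False by simp
qed

text \<open>With \<sigma> enumerating the s vertices of S, vertex u stands for copy u div s of \<sigma> (u mod s);
  copies of the same vertex are ordered by size. On {0..<n} the first j vertices span this
  blow-up of S and all other arcs point upwards, so j = 0 gives a transitive tournament and
  j = s * q the q-fold blow-up.\<close>
definition blowup_arc :: "tourn \<Rightarrow> (nat \<Rightarrow> nat) \<Rightarrow> nat \<Rightarrow> nat \<Rightarrow> nat \<Rightarrow> bool" where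
  "blowup_arc S \<sigma> s u v \<longleftrightarrow>
     (if u mod s = v mod s then u < v else arc S (\<sigma> (u mod s)) (\<sigma> (v mod s)))"

definition partial_blowup :: "tourn \<Rightarrow> (nat \<Rightarrow> nat) \<Rightarrow> nat \<Rightarrow> nat \<Rightarrow> nat \<Rightarrow> tourn" where
  "partial_blowup S \<sigma> s n j = ({0..<n}, \<lambda>u v. if u < j \<and> v < j then blowup_arc S \<sigma> s u v else u < v)"

lemma verts_partial_blowup [simp]: "verts (partial_blowup S \<sigma> s n j) = {0..<n}"
  by (simp add: partial_blowup_def verts_def)

lemma arc_partial_blowup:
  "arc (partial_blowup S \<sigma> s n j) u v \<longleftrightarrow> (if u < j \<and> v < j then blowup_arc S \<sigma> s u v else u < v)"
  by (simp add: partial_blowup_def arc_def)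

lemma tournament_partial_blowup:
  assumes S: "tournament S" and \<sigma>: "bij_betw \<sigma> {0..<s} (verts S)" and "0 < s"
  shows "tournament (partial_blowup S \<sigma> s n j)"
proof -
  have asym: "arc (partial_blowup S \<sigma> s n j) u v \<longleftrightarrow> \<not> arc (partial_blowup S \<sigma> s n j) v u"
    if "u \<noteq> v" for u v
  proof (cases "u mod s = v mod s")
    case False
    have "u mod s \<in> {0..<s}" "v mod s \<in> {0..<s}" using \<open>0 < s\<close> by auto
    then have "\<sigma> (u mod s) \<in> verts S" "\<sigma> (v mod s) \<in> verts S" "\<sigma> (u mod s) \<noteq> \<sigma> (v mod s)"
      using bij_betw_apply[OF \<sigma>] inj_onD[OF bij_betw_imp_inj_on[OF \<sigma>]] False by blast+
    then have "arc S (\<sigma> (u mod s)) (\<sigma> (v mod s)) \<longleftrightarrow> \<not> arc S (\<sigma> (v mod s)) (\<sigma> (u mod s))"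
      using S unfolding tournament_def by blast
    then show ?thesis
      using False not_sym[OF False] \<open>u \<noteq> v\<close> by (auto simp: arc_partial_blowup blowup_arc_def)
  next
    case True
    then show ?thesis
      using \<open>u \<noteq> v\<close> by (auto simp: arc_partial_blowup blowup_arc_def)
  qed
  moreover have "\<not> arc (partial_blowup S \<sigma> s n j) u u" for u
    by (simp add: arc_partial_blowup blowup_arc_def)
  ultimately show ?thesis
    unfolding tournament_def verts_partial_blowup using finite_atLeastLessThan by blast
qed

lemma transitive_partial_blowup_0: "transitive_tournament (partial_blowup S \<sigma> s n 0)"
  by (auto simp: transitive_tournament_def arc_partial_blowup)

lemma ncopies_partial_blowup_Suc_le:
  assumes "j < n"
  shows "ncopies H (partial_blowup S \<sigma> s n (Suc j))
    \<le> ncopies H (partial_blowup S \<sigma> s n j) + ((n - 1) choose (card (verts H) - 1))"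
  using ncopies_le_if_arcs_agree_off_vertex[of "partial_blowup S \<sigma> s n j" "partial_blowup S \<sigma> s n (Suc j)" j H]
  by (auto simp: arc_partial_blowup less_Suc_eq)

lemma partial_blowup_multiples_ordered:
  "\<forall>u\<in>(\<lambda>i. s * i) ` {0..<q}. \<forall>v\<in>(\<lambda>i. s * i) ` {0..<q}.
    arc (partial_blowup S \<sigma> s n j) u v \<longleftrightarrow> u < v"
  by (auto simp: arc_partial_blowup blowup_arc_def)

definition blowup_lift :: "(nat \<Rightarrow> nat) \<Rightarrow> nat \<Rightarrow> (nat \<Rightarrow> nat) \<Rightarrow> nat \<Rightarrow> nat" where
  "blowup_lift \<sigma> s g y = inv_into {0..<s} \<sigma> y + s * g y"

lemma
  assumes \<sigma>: "bij_betw \<sigma> {0..<s} (verts S)" and "y \<in> verts S"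
  shows blowup_lift_mod: "\<sigma> (blowup_lift \<sigma> s g y mod s) = y"
    and blowup_lift_div: "blowup_lift \<sigma> s g y div s = g y"
    and blowup_lift_less: "g y < q \<Longrightarrow> blowup_lift \<sigma> s g y < s * q"
proof -
  have "inv_into {0..<s} \<sigma> y < s"
    using bij_betw_apply[OF bij_betw_inv_into[OF \<sigma>] \<open>y \<in> verts S\<close>] by simp
  moreover have "\<sigma> (inv_into {0..<s} \<sigma> y) = y" using assms by (rule bij_betw_inv_into_right)
  ultimately show "\<sigma> (blowup_lift \<sigma> s g y mod s) = y" "blowup_lift \<sigma> s g y div s = g y"
    by (simp_all add: blowup_lift_def)
  assume "g y < q"
  have "inv_into {0..<s} \<sigma> y + s * g y < s * Suc (g y)"
    using \<open>inv_into {0..<s} \<sigma> y < s\<close> by simp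
  also have "\<dots> \<le> s * q" using \<open>g y < q\<close> by (intro mult_le_mono2) simp
  finally show "blowup_lift \<sigma> s g y < s * q" unfolding blowup_lift_def .
qed

lemma blowup_lift_copy_in_blowup:
  assumes S: "tournament S" and \<sigma>: "bij_betw \<sigma> {0..<s} (verts S)"
    and Y: "Y \<in> copies H S" and g: "g \<in> Y \<rightarrow>\<^sub>E {0..<q}"
  shows "blowup_lift \<sigma> s g ` Y \<in> copies H (partial_blowup S \<sigma> s (s * q) (s * q))"
proof -
  let ?B = "partial_blowup S \<sigma> s (s * q) (s * q)"
  let ?lift = "blowup_lift \<sigma> s g"
  define proj where "proj z = \<sigma> (z mod s)" for z
  have YS: "Y \<subseteq> verts S" and card_Y: "card Y = card (verts H)"
    and iso_Y: "tourn_iso (induced S Y) H"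
    using Y by (auto simp: copies_def)
  have proj_lift: "proj (?lift y) = y" and less: "?lift y < s * q" if "y \<in> Y" for y
    using blowup_lift_mod[OF \<sigma>] blowup_lift_less[OF \<sigma>] PiE_mem[OF g that] that YS
    by (auto simp: proj_def)
  have inj: "inj_on ?lift Y" using proj_lift by (rule inj_on_inverseI)
  have bij: "bij_betw proj (?lift ` Y) Y"
    using proj_lift by (intro bij_betw_byWitness[where f' = ?lift]) auto
  have arcs: "arc ?B a b \<longleftrightarrow> arc S (proj a) (proj b)" if ab: "a \<in> ?lift ` Y" "b \<in> ?lift ` Y" for a b
  proof -
    obtain x y where xy: "x \<in> Y" "y \<in> Y" "a = ?lift x" "b = ?lift y" using ab by blast
    then have proj: "proj a = x" "proj b = y" using proj_lift by auto
    show ?thesis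
    proof (cases "x = y")
      case True
      have "\<not> arc S x x" using S YS xy(1) unfolding tournament_def by blast
      then show ?thesis using True xy proj by (simp add: arc_partial_blowup blowup_arc_def)
    next
      case False
      then have "a mod s \<noteq> b mod s" using proj unfolding proj_def by auto
      moreover have "a < s * q" "b < s * q" using xy less by auto
      ultimately show ?thesis by (simp add: arc_partial_blowup blowup_arc_def proj_def)
    qed
  qed
  have "tourn_iso (induced ?B (?lift ` Y)) (induced S Y)"
    unfolding tourn_iso_def using bij arcs by (intro exI[of _ proj]) simp
  then have "tourn_iso (induced ?B (?lift ` Y)) H" using iso_Y by (rule tourn_iso_trans)
  moreover have "?lift ` Y \<subseteq> {0..<s * q}" "card (?lift ` Y) = card (verts H)"
    using less card_image[OF inj] card_Y by auto
  ultimately show ?thesis unfolding copies_def by simp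
qed

text \<open>A set Y of vertices of S and a copy index for each of its vertices can be read
  back from the lifted set: Y from the residues, the indices from the quotients.\<close>
lemma inj_on_blowup_lift:
  assumes \<sigma>: "bij_betw \<sigma> {0..<s} (verts S)"
  shows "inj_on (\<lambda>(Y, g). blowup_lift \<sigma> s g ` Y) (SIGMA Y:Pow (verts S). Y \<rightarrow>\<^sub>E B)"
proof (rule inj_onI, clarify)
  fix Y g Y' g' assume Y: "Y \<subseteq> verts S" "g \<in> Y \<rightarrow>\<^sub>E B" and Y': "Y' \<subseteq> verts S" "g' \<in> Y' \<rightarrow>\<^sub>E B"
    and eq: "blowup_lift \<sigma> s g ` Y = blowup_lift \<sigma> s g' ` Y'"
  define proj where "proj z = \<sigma> (z mod s)" for z
  have proj_image: "proj ` blowup_lift \<sigma> s h ` X = X" if "X \<subseteq> verts S" for h X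
  proof -
    have "proj ` blowup_lift \<sigma> s h ` X = (\<lambda>y. proj (blowup_lift \<sigma> s h y)) ` X"
      by (rule image_image)
    also have "\<dots> = X" using that blowup_lift_mod[OF \<sigma>] by (simp add: subset_iff proj_def)
    finally show ?thesis .
  qed
  have "Y = Y'" using proj_image[OF Y(1), of g] proj_image[OF Y'(1), of g'] eq by simp
  moreover have "g y = g' y" if "y \<in> Y" for y
  proof -
    obtain y' where "y' \<in> Y" "blowup_lift \<sigma> s g y = blowup_lift \<sigma> s g' y'"
      using eq \<open>y \<in> Y\<close> \<open>Y = Y'\<close> by blast
    moreover have "y \<in> verts S" "y' \<in> verts S" using Y(1) \<open>y \<in> Y\<close> \<open>y' \<in> Y\<close> by auto
    ultimately show ?thesis using blowup_lift_mod[OF \<sigma>] blowup_lift_div[OF \<sigma>] by metis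
  qed
  ultimately show "Y = Y' \<and> g = g'" using Y(2) Y'(2) by (auto intro: PiE_ext)
qed

lemma card_copies_PiE:
  assumes "finite (verts S)"
  shows "card (SIGMA Y:copies H S. Y \<rightarrow>\<^sub>E {0..<q}) = ncopies H S * q ^ card (verts H)"
proof -
  have Y: "finite Y" "card Y = card (verts H)" if "Y \<in> copies H S" for Y
    using that assms by (auto simp: copies_def intro: finite_subset)
  then have "card (SIGMA Y:copies H S. Y \<rightarrow>\<^sub>E {0..<q}) = (\<Sum>Y\<in>copies H S. card (Y \<rightarrow>\<^sub>E {0..<q}))"
    using assms by (intro card_SigmaI finite_copies ballI finite_PiE) auto
  also have "\<dots> = (\<Sum>Y\<in>copies H S. q ^ card (verts H))"
    using Y by (intro sum.cong) (simp_all add: card_PiE)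
  finally show ?thesis by (simp add: ncopies_eq_card_copies)
qed

lemma ncopies_blowup_ge:
  assumes S: "tournament S" and \<sigma>: "bij_betw \<sigma> {0..<s} (verts S)"
  shows "ncopies H S * q ^ card (verts H) \<le> ncopies H (partial_blowup S \<sigma> s (s * q) (s * q))"
proof -
  let ?D = "SIGMA Y:copies H S. Y \<rightarrow>\<^sub>E {0..<q}"
  have "inj_on (\<lambda>(Y, g). blowup_lift \<sigma> s g ` Y) ?D"
    by (rule inj_on_subset[OF inj_on_blowup_lift[OF \<sigma>]]) (auto simp: copies_def)
  moreover have "(\<lambda>(Y, g). blowup_lift \<sigma> s g ` Y) ` ?D \<subseteq> copies H (partial_blowup S \<sigma> s (s * q) (s * q))"
    by (auto intro!: blowup_lift_copy_in_blowup[OF S \<sigma>])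
  ultimately have "card ?D \<le> ncopies H (partial_blowup S \<sigma> s (s * q) (s * q))"
    unfolding ncopies_eq_card_copies by (intro card_inj_on_le) (simp_all add: finite_copies)
  then show ?thesis using S by (simp add: card_copies_PiE tournament_def)
qed

lemma discrete_intermediate_value:
  fixes f :: "nat \<Rightarrow> real"
  assumes "f 0 < r" "r \<le> f n" and step: "\<And>j. j < n \<Longrightarrow> f (Suc j) \<le> f j + e"
  shows "\<exists>j\<le>n. r \<le> f j \<and> f j \<le> r + e"
proof -
  define j where "j = (LEAST j. r \<le> f j)"
  have "r \<le> f j" "j \<le> n"
    unfolding j_def using assms(2) by (auto intro: LeastI Least_le)
  moreover obtain i where i: "j = Suc i"
    using \<open>r \<le> f j\<close> assms(1) by (cases j) auto
  then have "f i < r" using not_less_Least[of i "\<lambda>j. r \<le> f j"] unfolding j_def by simp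
  moreover have "f j \<le> f i + e" using step[of i] i \<open>j \<le> n\<close> by simp
  ultimately show ?thesis by (intro exI[of _ j]) simp
qed

lemma LIMSEQ_squeeze_harmonic:
  fixes f :: "nat \<Rightarrow> real"
  assumes "\<And>m. r \<le> f m" "\<And>m. f m \<le> r + c / real (Suc m)"
  shows "f \<longlonglongrightarrow> r"
proof (rule tendsto_sandwich[of "\<lambda>_. r" _ _ "\<lambda>m. r + c / real (Suc m)"])
  have "(\<lambda>m. c / real (Suc m)) \<longlonglongrightarrow> 0"
    using LIMSEQ_Suc[OF lim_const_over_n[of c]] by simp
  then show "(\<lambda>m. r + c / real (Suc m)) \<longlonglongrightarrow> r"
    using tendsto_add[OF tendsto_const[of r]] by fastforce
qed (use assms in auto)

lemma density_partial_blowup_Suc_le: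
  assumes "j < n" "1 \<le> card (verts H)" "card (verts H) \<le> n"
  shows "density H (partial_blowup S \<sigma> s n (Suc j))
    \<le> density H (partial_blowup S \<sigma> s n j) + card (verts H) / n"
proof -
  define k where "k = card (verts H)"
  have pos: "0 < real (n choose k)" using assms unfolding k_def by simp
  have "real k * real (n choose k) = real n * real ((n - 1) choose (k - 1))"
    using binomial_absorption[of "k - 1" n] assms unfolding k_def
    by (metis Suc_diff_1 less_le_trans of_nat_mult zero_less_one)
  then have absorb: "real ((n - 1) choose (k - 1)) / real (n choose k) = real k / real n"
    using pos assms by (simp add: field_simps)
  have "density H (partial_blowup S \<sigma> s n (Suc j))
      \<le> (real (ncopies H (partial_blowup S \<sigma> s n j)) + real ((n - 1) choose (k - 1))) / real (n choose k)"
    using ncopies_partial_blowup_Suc_le[OF \<open>j < n\<close>, of H S \<sigma> s] assms pos unfolding k_def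
    by (simp add: density_eq_ncopies divide_right_mono)
  also have "\<dots> = density H (partial_blowup S \<sigma> s n j) + real k / real n"
    using assms unfolding k_def absorb[symmetric, unfolded k_def]
    by (simp add: density_eq_ncopies add_divide_distrib)
  finally show ?thesis unfolding k_def .
qed

lemma random_density_le_density_blowup:
  assumes S: "tournament S" and \<sigma>: "bij_betw \<sigma> {0..<s} (verts S)" and "finite (verts H)"
    and k: "card (verts H) \<le> s * q"
    and many: "real s ^ card (verts H) * 2 powr (- real (card (verts H) choose 2)) \<le> real (ncopies H S)"
  shows "random_density H \<le> density H (partial_blowup S \<sigma> s (s * q) (s * q))"
proof -
  define k where "k = card (verts H)"
  define n where "n = s * q"
  define P :: real where "P = 2 powr (- real (k choose 2))"
  have pos: "0 < real (n choose k)" using k unfolding k_def n_def by simp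
  have "fact k * P * real (n choose k) \<le> (real s ^ k * P) * real q ^ k"
    using real_binomial_fact_le_power[of n k] unfolding n_def
    by (simp add: P_def power_mult_distrib mult_ac mult_right_mono)
  also have "\<dots> \<le> real (ncopies H S) * real q ^ k"
    using many unfolding k_def P_def by (simp add: mult_right_mono)
  also have "\<dots> \<le> real (ncopies H (partial_blowup S \<sigma> s n n))"
    using ncopies_blowup_ge[OF S \<sigma>, of H q] unfolding k_def n_def
    by (metis of_nat_le_iff of_nat_mult of_nat_power)
  finally have "fact k * P \<le> density H (partial_blowup S \<sigma> s n n)"
    using pos k unfolding k_def n_def by (simp add: density_eq_ncopies pos_le_divide_eq)
  moreover have "random_density H \<le> fact k * P"
    using random_density_le[OF \<open>finite (verts H)\<close>] unfolding k_def P_def .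
  ultimately show ?thesis unfolding n_def by linarith
qed

lemma verts_nonempty_if_not_transitive: "\<not> transitive_tournament H \<Longrightarrow> verts H \<noteq> {}"
  by (auto simp: transitive_tournament_def)

lemma exists_partial_blowup_density_near_random:
  assumes H: "tournament H" "\<not> transitive_tournament H"
    and S: "tournament S" and \<sigma>: "bij_betw \<sigma> {0..<s} (verts S)"
    and "card (verts H) < s" "0 < q"
    and many: "real s ^ card (verts H) * 2 powr (- real (card (verts H) choose 2)) \<le> real (ncopies H S)"
  shows "\<exists>j\<le>s * q. random_density H \<le> density H (partial_blowup S \<sigma> s (s * q) j) \<and>
    density H (partial_blowup S \<sigma> s (s * q) j) \<le> random_density H + card (verts H) / real (s * q)"
proof (rule discrete_intermediate_value)
  have finH: "finite (verts H)" using H by (simp add: tournament_def)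
  have "s \<le> s * q" using \<open>0 < q\<close> by simp
  then have k: "1 \<le> card (verts H)" "card (verts H) \<le> s * q"
    using verts_nonempty_if_not_transitive[OF H(2)] finH \<open>card (verts H) < s\<close>
    by (simp add: Suc_le_eq card_gt_0_iff, linarith)
  show "density H (partial_blowup S \<sigma> s (s * q) 0) < random_density H"
    using ncopies_eq_0_if_transitive[OF transitive_partial_blowup_0 H(2)] random_density_pos[OF finH]
    by (simp add: density_def)
  show "random_density H \<le> density H (partial_blowup S \<sigma> s (s * q) (s * q))"
    using random_density_le_density_blowup[OF S \<sigma> finH k(2) many] .
  show "density H (partial_blowup S \<sigma> s (s * q) (Suc j))
      \<le> density H (partial_blowup S \<sigma> s (s * q) j) + card (verts H) / real (s * q)" if "j < s * q" for j
    using density_partial_blowup_Suc_le[OF that k] by simp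
qed

lemma not_quasirandom_partial_blowups:
  assumes "0 < s"
  shows "\<not> quasirandom (\<lambda>m. partial_blowup S \<sigma> s (s * Suc m) (J m))"
proof (rule not_quasirandom_if_linear_ordered_subsets)
  let ?A = "\<lambda>m. (\<lambda>i. s * i) ` {0..<Suc m}"
  have card_A: "card (?A m) = Suc m" for m using assms by (simp add: card_image inj_on_def)
  then show "filterlim (\<lambda>m. card (?A m)) at_top sequentially" by (simp add: filterlim_Suc)
  show "?A m \<subseteq> verts (partial_blowup S \<sigma> s (s * Suc m) (J m))" for m
    using assms by (auto simp del: mult_Suc_right)
  show "\<forall>u\<in>?A m. \<forall>v\<in>?A m. arc (partial_blowup S \<sigma> s (s * Suc m) (J m)) u v \<longleftrightarrow> u < v" for m
    by (rule partial_blowup_multiples_ordered)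
  show "real (card (verts (partial_blowup S \<sigma> s (s * Suc m) (J m)))) \<le> real s * real (card (?A m))" for m
    by (simp add: card_A ring_distribs)
qed (use assms in simp)

theorem proposition4p1:
  fixes H S :: tourn and k s :: nat
  assumes "tournament H" and "card (verts H) = k" and "\<not> transitive_tournament H"
    and "tournament S" and "card (verts S) = s" and "s > k"
    and "real (ncopies H S) \<ge> real s ^ k * 2 powr (- real (k choose 2))"
  shows "\<not> quasirandom_forcing H"
proof
  assume forcing: "quasirandom_forcing H"
  obtain \<sigma> where \<sigma>: "bij_betw \<sigma> {0..<s} (verts S)"
    using ex_bij_betw_nat_finite[of "verts S"] assms(4,5) by (auto simp: tournament_def atLeast0LessThan)
  have "0 < s" using assms(6) by simp
  have "\<exists>j\<le>s * Suc m. random_density H \<le> density H (partial_blowup S \<sigma> s (s * Suc m) j) \<and>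
      density H (partial_blowup S \<sigma> s (s * Suc m) j) \<le> random_density H + (k / s) / real (Suc m)" for m
    using exists_partial_blowup_density_near_random[OF assms(1,3,4) \<sigma>, of "Suc m"] assms(2,6,7)
    by (simp add: ring_distribs)
  then obtain J where J: "\<And>m. random_density H \<le> density H (partial_blowup S \<sigma> s (s * Suc m) (J m))"
    "\<And>m. density H (partial_blowup S \<sigma> s (s * Suc m) (J m)) \<le> random_density H + (k / s) / real (Suc m)"
    by metis
  let ?G = "\<lambda>m. partial_blowup S \<sigma> s (s * Suc m) (J m)"
  have "Suc m \<le> card (verts (?G m))" for m using mult_le_mono1[of 1 s "Suc m"] \<open>0 < s\<close> by simp
  then have "filterlim (\<lambda>m. card (verts (?G m))) at_top sequentially"
    by (intro filterlim_at_top_mono[OF filterlim_Suc always_eventually] allI)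
  moreover have "(\<lambda>m. density H (?G m)) \<longlonglongrightarrow> random_density H"
    using J by (rule LIMSEQ_squeeze_harmonic)
  moreover have "\<forall>m. tournament (?G m)"
    using tournament_partial_blowup[OF assms(4) \<sigma> \<open>0 < s\<close>] by blast
  ultimately have "quasirandom ?G"
    using forcing[unfolded quasirandom_forcing_def, THEN spec[of _ ?G]] by blast
  with not_quasirandom_partial_blowups[OF \<open>0 < s\<close>] show False by contradiction
qed

end
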